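(* Let $T,S$ be two causal teams over $\sigma$ with $T\approx S$, or two generalized causal teams over $\sigma$ with $T\approx S$. Then for every formula $\varphi$ of $\mathcal{CO}[\sigma]$, $\mathcal{CO}_{\sqcup}[\sigma]$ or $\mathcal{COD}[\sigma]$, we have $T\models\varphi$ if and only if $S\models\varphi$ (with $\models^c$ for causal teams, $\models^g$ for generalized causal teams).
   Context: A signature $\sigma=(\mathrm{Dom},\mathrm{Ran})$: $\mathrm{Dom}$ nonempty finite set of variables, each $X$ with nonempty finite range $\mathrm{Ran}(X)$. $\mathbf X=\mathbf x$ abbreviates $X_1=x_1\wedge\dots\wedge X_n=x_n$ ($\mathbf x\in\mathrm{Ran}(\mathbf X)=\prod_i\mathrm{Ran}(X_i)$); inconsistent if it contains $X=x,X=x'$ with $x\ne x'$. Languages: $\mathcal{CO}[\sigma]$: $\alpha::=X=x\mid\neg\alpha\mid\alpha\wedge\alpha\mid\alpha\vee\alpha\mid\mathbf X=\mathbf x\;\Box\!\!\rightarrow\alpha$; $\mathcal{CO}_{\sqcup}[\sigma]$: $\varphi::=X=x\mid\neg\alpha\mid\varphi\wedge\varphi\mid\varphi\vee\varphi\mid\varphi\sqcup\varphi\mid\mathbf X=\mathbf x\;\Box\!\!\rightarrow\varphi$; $\mathcal{COD}[\sigma]$: $\varphi::=X=x\mid{=}(\mathbf X;Y)\mid\neg\alpha\mid\varphi\wedge\varphi\mid\varphi\vee\varphi\mid\mathbf X=\mathbf x\;\Box\!\!\rightarrow\varphi$ (always $\alpha\in\mathcal{CO}[\sigma]$). Assignments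 $s$ ($s(X)\in\mathrm{Ran}(X)$) form $\mathbb A_\sigma$. A system of functions $\mathcal F$ gives for each $V\in\mathrm{En}(\mathcal F)\subseteq\mathrm{Dom}$ parents $PA^{\mathcal F}_V\subseteq\mathrm{Dom}\setminus\{V\}$ and $\mathcal F_V:\mathrm{Ran}(PA^{\mathcal F}_V)\to\mathrm{Ran}(V)$; $\mathrm{Ex}(\mathcal F)=\mathrm{Dom}\setminus\mathrm{En}(\mathcal F)$; only recursive (acyclic parent graph) systems, forming $\mathbb F_\sigma$. $s$ compatible with $\mathcal F$: $s(V)=\mathcal F_V(s(PA^{\mathcal F}_V))$ for $V\in\mathrm{En}(\mathcal F)$; $\mathbb S_\sigma$ the set of compatible pairs. For consistent $\mathbf X=\mathbf x$: $\mathcal F_{\mathbf X=\mathbf x}$ restricts $\mathcal F$ to $\mathrm{En}(\mathcal F)\setminus\mathbf X$; $s^{\mathcal F}_{\mathbf X=\mathbf x}$: $X_i\mapsto x_i$, $V\mapsto s(V)$ on $\mathrm{Ex}(\mathcal F)\setminus\mathbf X$, $V\mapsto\mathcal F_V(s^{\mathcal F}_{\mathbf X=\mathbf x}(PA^{\mathcal F}_V))$ on $\mathrm{En}(\mathcal F)\setminus\mathbf X$. Causal team $T=(T^-,\mathcal F)$: $T^-$ a set of assignments compatible with $\mathcal F$; empty team components identified as $\emptyset$; causal subteams $(S^-,\mathcal F)$ with $S^-\subseteq T^-$; $T_{\mathbf X=\mathbf x}=(\{s^{\mathcal F}_{\mathbf X=\mathbf x}:s\in T^-\},\mathcal F_{\mathbf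 X=\mathbf x})$. $\models^c$: $T\models X=x$ iff all $s\in T^-$ have $s(X)=x$; $T\models{=}(\mathbf X;Y)$ iff $s(\mathbf X)=s'(\mathbf X)$ implies $s(Y)=s'(Y)$ for $s,s'\in T^-$; $T\models\neg\alpha$ iff $(\{s\},\mathcal F)\not\models\alpha$ for all $s\in T^-$; $\wedge$ classical; $T\models\varphi\vee\psi$ iff there are causal subteams $T_1,T_2$ with $T_1^-\cup T_2^-=T^-$, $T_1\models\varphi$, $T_2\models\psi$; $T\models\varphi\sqcup\psi$ iff $T\models\varphi$ or $T\models\psi$; $T\models\mathbf X=\mathbf x\;\Box\!\!\rightarrow\varphi$ iff $\mathbf X=\mathbf x$ inconsistent or $T_{\mathbf X=\mathbf x}\models\varphi$. Generalized causal team: $T\subseteq\mathbb S_\sigma$, $T^-=\{s:(s,\mathcal F)\in T\}$, $T_{\mathbf X=\mathbf x}=\{(s^{\mathcal F}_{\mathbf X=\mathbf x},\mathcal F_{\mathbf X=\mathbf x}):(s,\mathcal F)\in T\}$; $\models^g$: same clauses but $T\models\neg\alpha$ iff $\{(s,\mathcal F)\}\not\models\alpha$ for all $(s,\mathcal F)\in T$, and $T\models\varphi\vee\psi$ iff $T=T_1\cup T_2$, $T_1\models\varphi$, $T_2\models\psi$. Equivalence: $\mathrm{Cn}(\mathcal F)=\{V\in\mathrm{En}(\mathcal F):\mathcal F_V\text{ constant}\}$; $\mathcal F_V\sim\mathcal G_V$ iff $\mathcal F_V(\mathbf x\mathbf y)=\mathcal G_V(\mathbf x\mathbf z)$ for all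 $\mathbf x\in\mathrm{Ran}(PA^{\mathcal F}_V\cap PA^{\mathcal G}_V)$, $\mathbf y\in\mathrm{Ran}(PA^{\mathcal F}_V\setminus PA^{\mathcal G}_V)$, $\mathbf z\in\mathrm{Ran}(PA^{\mathcal G}_V\setminus PA^{\mathcal F}_V)$; $\mathcal F\sim\mathcal G$ iff $\mathrm{En}(\mathcal F)\setminus\mathrm{Cn}(\mathcal F)=\mathrm{En}(\mathcal G)\setminus\mathrm{Cn}(\mathcal G)$ and $\mathcal F_V\sim\mathcal G_V$ for each such $V$. Nonempty causal teams $(T^-,\mathcal F)\approx(S^-,\mathcal G)$ iff $T^-=S^-$ and $\mathcal F\sim\mathcal G$. Generalized: $T^{\mathcal F}=\{(s,\mathcal G)\in T:\mathcal G\sim\mathcal F\}$ and $S\approx T$ iff $(S^{\mathcal F})^-=(T^{\mathcal F})^-$ for all $\mathcal F\in\mathbb F_\sigma$. *)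

theory Defs
  imports Main
begin

record ('v, 'a) signature =
  sDom :: "'v set"
  sRan :: "'v \<Rightarrow> 'a set"

definition signature_ok :: "('v, 'a) signature \<Rightarrow> bool" where
  "signature_ok \<sigma> \<longleftrightarrow> finite (sDom \<sigma>) \<and> sDom \<sigma> \<noteq> {} \<and>
     (\<forall>X\<in>sDom \<sigma>. finite (sRan \<sigma> X) \<and> sRan \<sigma> X \<noteq> {})"

type_synonym ('v, 'a) assignment = "'v \<Rightarrow> 'a"

text \<open>The set of assignments A_sigma (canonical: undefined outside Dom).\<close>
definition assignments :: "('v, 'a) signature \<Rightarrow> ('v, 'a) assignment set" where
  "assignments \<sigma> = {s. (\<forall>X\<in>sDom \<sigma>. s X \<in> sRan \<sigma> X) \<and> (\<forall>X. X \<notin> sDom \<sigma> \<longrightarrow> s X = undefined)}"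

text \<open>Fn F V is the function F_V, represented as acting on assignments; well-formedness
  forces it to depend only on the parents and to be undefined outside Ran(PA_V).\<close>
record ('v, 'a) sysf =
  En :: "'v set"
  PA :: "'v \<Rightarrow> 'v set"
  Fn :: "'v \<Rightarrow> ('v, 'a) assignment \<Rightarrow> 'a"

definition Ex :: "('v, 'a) signature \<Rightarrow> ('v, 'a) sysf \<Rightarrow> 'v set" where
  "Ex \<sigma> F = sDom \<sigma> - En F"

definition in_ran_on :: "('v, 'a) signature \<Rightarrow> 'v set \<Rightarrow> ('v, 'a) assignment \<Rightarrow> bool" where
  "in_ran_on \<sigma> A s \<longleftrightarrow> (\<forall>X\<in>A. s X \<in> sRan \<sigma> X)"

definition parent_rel :: "('v, 'a) sysf \<Rightarrow> ('v \<times> 'v) set" where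
  "parent_rel F = {(P, V). V \<in> En F \<and> P \<in> PA F V}"

definition sysf_ok :: "('v, 'a) signature \<Rightarrow> ('v, 'a) sysf \<Rightarrow> bool" where
  "sysf_ok \<sigma> F \<longleftrightarrow>
     En F \<subseteq> sDom \<sigma> \<and>
     (\<forall>V\<in>En F. PA F V \<subseteq> sDom \<sigma> - {V}) \<and>
     (\<forall>V. V \<notin> En F \<longrightarrow> PA F V = {} \<and> Fn F V = (\<lambda>_. undefined)) \<and>
     (\<forall>V\<in>En F. \<forall>s. in_ran_on \<sigma> (PA F V) s \<longrightarrow> Fn F V s \<in> sRan \<sigma> V) \<and>
     (\<forall>V\<in>En F. \<forall>s s'. (\<forall>X\<in>PA F V. s X = s' X) \<longrightarrow> Fn F V s = Fn F V s') \<and>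
     (\<forall>V\<in>En F. \<forall>s. \<not> in_ran_on \<sigma> (PA F V) s \<longrightarrow> Fn F V s = undefined) \<and>
     acyclic (parent_rel F)"

definition compatible :: "('v, 'a) sysf \<Rightarrow> ('v, 'a) assignment \<Rightarrow> bool" where
  "compatible F s \<longleftrightarrow> (\<forall>V\<in>En F. s V = Fn F V s)"

definition compat_pairs :: "('v, 'a) signature \<Rightarrow> (('v, 'a) assignment \<times> ('v, 'a) sysf) set" where
  "compat_pairs \<sigma> = {(s, F). sysf_ok \<sigma> F \<and> s \<in> assignments \<sigma> \<and> compatible F s}"

type_synonym ('v, 'a) interv = "('v \<times> 'a) list"

definition consistent :: "('v, 'a) interv \<Rightarrow> bool" where
  "consistent xs \<longleftrightarrow> (\<forall>(X, x)\<in>set xs. \<forall>(X', x')\<in>set xs. X = X' \<longrightarrow> x = x')"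

definition ivars :: "('v, 'a) interv \<Rightarrow> 'v set" where
  "ivars xs = fst ` set xs"

definition interv_sys :: "('v, 'a) sysf \<Rightarrow> ('v, 'a) interv \<Rightarrow> ('v, 'a) sysf" where
  "interv_sys F xs =
     \<lparr> En = En F - ivars xs,
       PA = (\<lambda>V. if V \<in> En F - ivars xs then PA F V else {}),
       Fn = (\<lambda>V. if V \<in> En F - ivars xs then Fn F V else (\<lambda>_. undefined)) \<rparr>"

text \<open>s^F_{X=x}: the unique assignment with X_i = x_i, agreeing with s on the exogenous
  non-intervened variables (and outside Dom), and satisfying the equations of F on the
  endogenous non-intervened variables (unique by recursiveness of F).\<close>
definition interv_asg :: "('v, 'a) sysf \<Rightarrow> ('v, 'a) interv \<Rightarrow> ('v, 'a) assignment \<Rightarrow> ('v, 'a) assignment" where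
  "interv_asg F xs s = (THE t.
      (\<forall>(X, x)\<in>set xs. t X = x) \<and>
      (\<forall>V. V \<notin> ivars xs \<and> V \<notin> En F \<longrightarrow> t V = s V) \<and>
      (\<forall>V. V \<in> En F \<and> V \<notin> ivars xs \<longrightarrow> t V = Fn F V t))"

datatype ('v, 'a) fm =
    Eq 'v 'a
  | Dep "'v list" 'v
  | Neg "('v, 'a) fm"
  | And "('v, 'a) fm" "('v, 'a) fm"
  | Or "('v, 'a) fm" "('v, 'a) fm"
  | GOr "('v, 'a) fm" "('v, 'a) fm"
  | Cf "('v, 'a) interv" "('v, 'a) fm"

fun is_CO :: "('v, 'a) fm \<Rightarrow> bool" where
  "is_CO (Eq X x) = True"
| "is_CO (Dep Xs Y) = False"
| "is_CO (Neg a) = is_CO a"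
| "is_CO (And a b) = (is_CO a \<and> is_CO b)"
| "is_CO (Or a b) = (is_CO a \<and> is_CO b)"
| "is_CO (GOr a b) = False"
| "is_CO (Cf xs a) = is_CO a"

fun is_COsq :: "('v, 'a) fm \<Rightarrow> bool" where
  "is_COsq (Eq X x) = True"
| "is_COsq (Dep Xs Y) = False"
| "is_COsq (Neg a) = is_CO a"
| "is_COsq (And a b) = (is_COsq a \<and> is_COsq b)"
| "is_COsq (Or a b) = (is_COsq a \<and> is_COsq b)"
| "is_COsq (GOr a b) = (is_COsq a \<and> is_COsq b)"
| "is_COsq (Cf xs a) = is_COsq a"

fun is_COD :: "('v, 'a) fm \<Rightarrow> bool" where
  "is_COD (Eq X x) = True"
| "is_COD (Dep Xs Y) = True"
| "is_COD (Neg a) = is_CO a"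
| "is_COD (And a b) = (is_COD a \<and> is_COD b)"
| "is_COD (Or a b) = (is_COD a \<and> is_COD b)"
| "is_COD (GOr a b) = False"
| "is_COD (Cf xs a) = is_COD a"

fun wff :: "('v, 'a) signature \<Rightarrow> ('v, 'a) fm \<Rightarrow> bool" where
  "wff \<sigma> (Eq X x) = (X \<in> sDom \<sigma> \<and> x \<in> sRan \<sigma> X)"
| "wff \<sigma> (Dep Xs Y) = (set Xs \<subseteq> sDom \<sigma> \<and> Y \<in> sDom \<sigma>)"
| "wff \<sigma> (Neg a) = wff \<sigma> a"
| "wff \<sigma> (And a b) = (wff \<sigma> a \<and> wff \<sigma> b)"
| "wff \<sigma> (Or a b) = (wff \<sigma> a \<and> wff \<sigma> b)"
| "wff \<sigma> (GOr a b) = (wff \<sigma> a \<and> wff \<sigma> b)"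
| "wff \<sigma> (Cf xs a) = (xs \<noteq> [] \<and> (\<forall>(X, x)\<in>set xs. X \<in> sDom \<sigma> \<and> x \<in> sRan \<sigma> X) \<and> wff \<sigma> a)"

type_synonym ('v, 'a) cteam = "('v, 'a) assignment set \<times> ('v, 'a) sysf"

definition causal_team :: "('v, 'a) signature \<Rightarrow> ('v, 'a) cteam \<Rightarrow> bool" where
  "causal_team \<sigma> T \<longleftrightarrow> sysf_ok \<sigma> (snd T) \<and> fst T \<subseteq> assignments \<sigma> \<and>
     (\<forall>s\<in>fst T. compatible (snd T) s)"

primrec csat :: "('v, 'a) cteam \<Rightarrow> ('v, 'a) fm \<Rightarrow> bool" where
  "csat T (Eq X x) = (\<forall>s\<in>fst T. s X = x)"
| "csat T (Dep Xs Y) = (\<forall>s\<in>fst T. \<forall>s'\<in>fst T. (\<forall>X\<in>set Xs. s X = s' X) \<longrightarrow> s Y = s' Y)"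
| "csat T (Neg a) = (\<forall>s\<in>fst T. \<not> csat ({s}, snd T) a)"
| "csat T (And a b) = (csat T a \<and> csat T b)"
| "csat T (Or a b) = (\<exists>T1 T2. T1 \<subseteq> fst T \<and> T2 \<subseteq> fst T \<and> T1 \<union> T2 = fst T \<and>
                          csat (T1, snd T) a \<and> csat (T2, snd T) b)"
| "csat T (GOr a b) = (csat T a \<or> csat T b)"
| "csat T (Cf xs a) = (\<not> consistent xs \<or>
      csat (interv_asg (snd T) xs ` fst T, interv_sys (snd T) xs) a)"

type_synonym ('v, 'a) gteam = "(('v, 'a) assignment \<times> ('v, 'a) sysf) set"

definition gen_team :: "('v, 'a) signature \<Rightarrow> ('v, 'a) gteam \<Rightarrow> bool" where
  "gen_team \<sigma> T \<longleftrightarrow> T \<subseteq> compat_pairs \<sigma>"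

definition gteam_interv :: "('v, 'a) interv \<Rightarrow> ('v, 'a) gteam \<Rightarrow> ('v, 'a) gteam" where
  "gteam_interv xs T = (\<lambda>(s, F). (interv_asg F xs s, interv_sys F xs)) ` T"

primrec gsat :: "('v, 'a) gteam \<Rightarrow> ('v, 'a) fm \<Rightarrow> bool" where
  "gsat T (Eq X x) = (\<forall>(s, F)\<in>T. s X = x)"
| "gsat T (Dep Xs Y) = (\<forall>(s, F)\<in>T. \<forall>(s', F')\<in>T. (\<forall>X\<in>set Xs. s X = s' X) \<longrightarrow> s Y = s' Y)"
| "gsat T (Neg a) = (\<forall>p\<in>T. \<not> gsat {p} a)"
| "gsat T (And a b) = (gsat T a \<and> gsat T b)"
| "gsat T (Or a b) = (\<exists>T1 T2. T = T1 \<union> T2 \<and> gsat T1 a \<and> gsat T2 b)"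
| "gsat T (GOr a b) = (gsat T a \<or> gsat T b)"
| "gsat T (Cf xs a) = (\<not> consistent xs \<or> gsat (gteam_interv xs T) a)"

definition Cn :: "('v, 'a) signature \<Rightarrow> ('v, 'a) sysf \<Rightarrow> 'v set" where
  "Cn \<sigma> F = {V\<in>En F. \<forall>s\<in>assignments \<sigma>. \<forall>s'\<in>assignments \<sigma>. Fn F V s = Fn F V s'}"

text \<open>F_V ~ G_V: F_V(x y) = G_V(x z) for all x on the common parents and arbitrary y, z on the
  private parents; i.e. for assignments agreeing on the common parents.\<close>
definition fun_sim :: "('v, 'a) signature \<Rightarrow> ('v, 'a) sysf \<Rightarrow> ('v, 'a) sysf \<Rightarrow> 'v \<Rightarrow> bool" where
  "fun_sim \<sigma> F G V \<longleftrightarrow>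
     (\<forall>s\<in>assignments \<sigma>. \<forall>s'\<in>assignments \<sigma>.
        (\<forall>X\<in>PA F V \<inter> PA G V. s X = s' X) \<longrightarrow> Fn F V s = Fn G V s')"

definition sys_sim :: "('v, 'a) signature \<Rightarrow> ('v, 'a) sysf \<Rightarrow> ('v, 'a) sysf \<Rightarrow> bool" where
  "sys_sim \<sigma> F G \<longleftrightarrow> En F - Cn \<sigma> F = En G - Cn \<sigma> G \<and>
     (\<forall>V\<in>En F - Cn \<sigma> F. fun_sim \<sigma> F G V)"

definition cteam_approx :: "('v, 'a) signature \<Rightarrow> ('v, 'a) cteam \<Rightarrow> ('v, 'a) cteam \<Rightarrow> bool" where
  "cteam_approx \<sigma> T S \<longleftrightarrow>
     (fst T = {} \<and> fst S = {}) \<or>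
     (fst T \<noteq> {} \<and> fst S \<noteq> {} \<and> fst T = fst S \<and> sys_sim \<sigma> (snd T) (snd S))"

definition gteam_restr :: "('v, 'a) signature \<Rightarrow> ('v, 'a) gteam \<Rightarrow> ('v, 'a) sysf \<Rightarrow> ('v, 'a) gteam" where
  "gteam_restr \<sigma> T F = {(s, G)\<in>T. sys_sim \<sigma> G F}"

definition gteam_approx :: "('v, 'a) signature \<Rightarrow> ('v, 'a) gteam \<Rightarrow> ('v, 'a) gteam \<Rightarrow> bool" where
  "gteam_approx \<sigma> S T \<longleftrightarrow>
     (\<forall>F. sysf_ok \<sigma> F \<longrightarrow> fst ` gteam_restr \<sigma> S F = fst ` gteam_restr \<sigma> T F)"

end

theory Submission
  imports Defs
begin

text \<open>Intervening on two similar systems of functions that are both compatible with an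
  assignment s produces the same assignment: an endogenous variable is either non-constant in
  both systems, whose functions then agree on the common parents, or constant wherever it is
  endogenous, and then by compatibility it keeps its value from s. The intervened systems are
  again similar, so by induction on formulas satisfaction depends only on the team of
  assignments and the similarity class of the system. For generalized teams, approximation
  gives every pair a partner with the same assignment and a similar system in the other team;
  this matching is inherited by the parts of a splitting, by singletons and by interventions.
  The argument covers all formulas at once.\<close>

definition interv_eqs ::
    "('v, 'a) sysf \<Rightarrow> ('v, 'a) interv \<Rightarrow> ('v, 'a) assignment \<Rightarrow> ('v, 'a) assignment \<Rightarrow> bool" where
  "interv_eqs F xs s t \<longleftrightarrow>
     (\<forall>(X, x)\<in>set xs. t X = x) \<and>
     (\<forall>V. V \<notin> ivars xs \<and> V \<notin> En F \<longrightarrow> t V = s V) \<and>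
     (\<forall>V. V \<in> En F \<and> V \<notin> ivars xs \<longrightarrow> t V = Fn F V t)"

definition interv_on :: "('v, 'a) signature \<Rightarrow> ('v, 'a) interv \<Rightarrow> bool" where
  "interv_on \<sigma> xs \<longleftrightarrow> (\<forall>(X, x)\<in>set xs. X \<in> sDom \<sigma> \<and> x \<in> sRan \<sigma> X)"

lemma interv_asg_def_eqs: "interv_asg F xs s = (THE t. interv_eqs F xs s t)"
  unfolding interv_asg_def interv_eqs_def by simp

lemma sysf_ok_Fn_cong:
  "sysf_ok \<sigma> F \<Longrightarrow> V \<in> En F \<Longrightarrow> \<forall>X\<in>PA F V. s X = s' X \<Longrightarrow> Fn F V s = Fn F V s'"
  unfolding sysf_ok_def by blast

lemma wf_parent_rel:
  assumes "finite (sDom \<sigma>)" and "sysf_ok \<sigma> F"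
  shows "wf (parent_rel F)"
proof -
  have "parent_rel F \<subseteq> sDom \<sigma> \<times> sDom \<sigma>"
    using assms(2) unfolding sysf_ok_def parent_rel_def by auto
  then have "finite (parent_rel F)"
    using assms(1) by (meson finite_SigmaI finite_subset)
  then show ?thesis
    using assms(2) finite_acyclic_wf unfolding sysf_ok_def by blast
qed

subsection \<open>Interventions\<close>

lemma interv_eqs_unique:
  assumes "finite (sDom \<sigma>)" "sysf_ok \<sigma> F" "interv_eqs F xs s t" "interv_eqs F xs s t'"
  shows "t = t'"
proof
  fix V
  show "t V = t' V"
    using wf_parent_rel[OF assms(1,2)]
  proof (induction V rule: wf_induct_rule)
    case (less V)
    consider "V \<in> ivars xs" | "V \<notin> ivars xs" "V \<in> En F" | "V \<notin> ivars xs" "V \<notin> En F"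
      by blast
    then show ?case
    proof cases
      case 1
      then obtain x where "(V, x) \<in> set xs" unfolding ivars_def by force
      then show ?thesis using assms(3,4) unfolding interv_eqs_def by auto
    next
      case 2
      have "\<forall>X\<in>PA F V. t X = t' X"
        using less 2 unfolding parent_rel_def by auto
      then show ?thesis
        using 2 assms(3,4) sysf_ok_Fn_cong[OF assms(2)] unfolding interv_eqs_def by auto
    next
      case 3
      then show ?thesis using assms(3,4) unfolding interv_eqs_def by auto
    qed
  qed
qed

lemma interv_eqs_exists:
  assumes "finite (sDom \<sigma>)" "sysf_ok \<sigma> F" "consistent xs"
  shows "\<exists>t. interv_eqs F xs s t"
proof -
  define step where "step = (\<lambda>t V.
    if V \<in> ivars xs then the (map_of xs V) else if V \<in> En F then Fn F V t else s V)"
  have "adm_wf (parent_rel F) step"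
    unfolding adm_wf_def step_def parent_rel_def
    using sysf_ok_Fn_cong[OF assms(2)] by auto
  then have fixpoint: "t = step t" if "t = wfrec (parent_rel F) step" for t
    using that wfrec_fixpoint[OF wf_parent_rel[OF assms(1,2)]] by simp
  define t where "t = wfrec (parent_rel F) step"
  have tV: "t V = (if V \<in> ivars xs then the (map_of xs V)
                   else if V \<in> En F then Fn F V t else s V)" for V
    using fun_cong[OF fixpoint[OF t_def], of V] unfolding step_def .
  have "t X = x" if Xx: "(X, x) \<in> set xs" for X x
  proof -
    obtain y where y: "map_of xs X = Some y"
      using Xx weak_map_of_SomeI by fastforce
    then have "y = x"
      using map_of_SomeD[OF y] Xx assms(3) unfolding consistent_def by blast
    moreover have "X \<in> ivars xs" using Xx unfolding ivars_def by force
    ultimately show ?thesis using tV[of X] y by simp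
  qed
  then have "interv_eqs F xs s t"
    unfolding interv_eqs_def using tV by auto
  then show ?thesis by blast
qed

lemma interv_asg_eqs:
  assumes "finite (sDom \<sigma>)" "sysf_ok \<sigma> F" "consistent xs"
  shows "interv_eqs F xs s (interv_asg F xs s)"
  unfolding interv_asg_def_eqs
  using interv_eqs_exists[OF assms] interv_eqs_unique[OF assms(1,2)] by (metis theI)

lemma interv_asg_eqI:
  assumes "finite (sDom \<sigma>)" "sysf_ok \<sigma> F" "consistent xs" "interv_eqs F xs s t"
  shows "interv_asg F xs s = t"
  using interv_eqs_unique[OF assms(1,2) interv_asg_eqs[OF assms(1-3)] assms(4)] .

lemma interv_asg_in_assignments:
  assumes fin: "finite (sDom \<sigma>)" and F: "sysf_ok \<sigma> F" and c: "consistent xs"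
    and xs: "interv_on \<sigma> xs" and s: "s \<in> assignments \<sigma>"
  shows "interv_asg F xs s \<in> assignments \<sigma>"
proof -
  define t where "t = interv_asg F xs s"
  have eqs: "interv_eqs F xs s t" using interv_asg_eqs[OF fin F c] t_def by simp
  have "V \<in> sDom \<sigma> \<longrightarrow> t V \<in> sRan \<sigma> V" for V
    using wf_parent_rel[OF fin F]
  proof (induction V rule: wf_induct_rule)
    case (less V)
    consider "V \<in> ivars xs" | "V \<notin> ivars xs" "V \<in> En F" | "V \<notin> ivars xs" "V \<notin> En F"
      by blast
    then show ?case
    proof cases
      case 1
      then obtain x where "(V, x) \<in> set xs" unfolding ivars_def by force
      then show ?thesis using eqs xs unfolding interv_eqs_def interv_on_def by auto
    next
      case 2
      have "PA F V \<subseteq> sDom \<sigma>" using F 2 unfolding sysf_ok_def by blast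
      then have "in_ran_on \<sigma> (PA F V) t"
        using less 2 unfolding in_ran_on_def parent_rel_def by auto
      then have "Fn F V t \<in> sRan \<sigma> V" using F 2 unfolding sysf_ok_def by blast
      then show ?thesis using eqs 2 unfolding interv_eqs_def by auto
    next
      case 3
      then show ?thesis using eqs s unfolding interv_eqs_def assignments_def by auto
    qed
  qed
  moreover have "ivars xs \<subseteq> sDom \<sigma>" "En F \<subseteq> sDom \<sigma>"
    using xs F unfolding interv_on_def ivars_def sysf_ok_def by auto
  then have "V \<notin> sDom \<sigma> \<Longrightarrow> t V = undefined" for V
    using eqs s unfolding interv_eqs_def assignments_def by auto
  ultimately show ?thesis unfolding assignments_def t_def[symmetric] by auto
qed

lemma compatible_interv_asg:
  assumes "finite (sDom \<sigma>)" "sysf_ok \<sigma> F" "consistent xs"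
  shows "compatible (interv_sys F xs) (interv_asg F xs s)"
  using interv_asg_eqs[OF assms] unfolding interv_eqs_def compatible_def interv_sys_def by auto

lemma sysf_ok_interv_sys:
  assumes "sysf_ok \<sigma> F"
  shows "sysf_ok \<sigma> (interv_sys F xs)"
proof -
  have "parent_rel (interv_sys F xs) \<subseteq> parent_rel F"
    unfolding parent_rel_def interv_sys_def by auto
  then have "acyclic (parent_rel (interv_sys F xs))"
    using assms acyclic_subset unfolding sysf_ok_def by blast
  then show ?thesis
    using assms unfolding sysf_ok_def by (auto simp: interv_sys_def)
qed

lemma Cn_interv_sys: "Cn \<sigma> (interv_sys F xs) = Cn \<sigma> F - ivars xs"
  unfolding Cn_def interv_sys_def by auto

lemma sys_sim_interv_sys:
  assumes "sys_sim \<sigma> F G"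
  shows "sys_sim \<sigma> (interv_sys F xs) (interv_sys G xs)"
proof -
  have "En (interv_sys K xs) - Cn \<sigma> (interv_sys K xs) = (En K - Cn \<sigma> K) - ivars xs" for K
    unfolding Cn_interv_sys by (auto simp: interv_sys_def)
  then show ?thesis
    using assms unfolding sys_sim_def by (auto simp: fun_sim_def interv_sys_def)
qed

lemma interv_asg_keeps_value:
  assumes fin: "finite (sDom \<sigma>)" and F: "sysf_ok \<sigma> F" and c: "consistent xs"
    and xs: "interv_on \<sigma> xs" and s: "s \<in> assignments \<sigma>" and compat: "compatible F s"
    and V: "V \<notin> ivars xs" "V \<notin> En F - Cn \<sigma> F"
  shows "interv_asg F xs s V = s V"
proof -
  define t where "t = interv_asg F xs s"
  have eqs: "interv_eqs F xs s t" using interv_asg_eqs[OF fin F c] t_def by simp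
  show ?thesis
  proof (cases "V \<in> En F")
    case True
    then have "V \<in> Cn \<sigma> F" using V by blast
    moreover have "t \<in> assignments \<sigma>"
      using interv_asg_in_assignments[OF fin F c xs s] t_def by simp
    ultimately have "Fn F V t = Fn F V s" using s unfolding Cn_def by blast
    also have "\<dots> = s V" using compat True unfolding compatible_def by simp
    finally show ?thesis using eqs True V unfolding interv_eqs_def t_def by auto
  next
    case False
    then show ?thesis using eqs V unfolding interv_eqs_def t_def by auto
  qed
qed

lemma interv_asg_sys_sim:
  assumes fin: "finite (sDom \<sigma>)" and F: "sysf_ok \<sigma> F" and G: "sysf_ok \<sigma> G"
    and sim: "sys_sim \<sigma> F G" and c: "consistent xs" and xs: "interv_on \<sigma> xs"
    and s: "s \<in> assignments \<sigma>" and cF: "compatible F s" and cG: "compatible G s"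
  shows "interv_asg F xs s = interv_asg G xs s"
proof -
  define t where "t = interv_asg F xs s"
  have eqs: "interv_eqs F xs s t" using interv_asg_eqs[OF fin F c] t_def by simp
  have t: "t \<in> assignments \<sigma>" using interv_asg_in_assignments[OF fin F c xs s] t_def by simp
  have dep: "En F - Cn \<sigma> F = En G - Cn \<sigma> G" using sim unfolding sys_sim_def by blast
  have keep: "t V = s V" if "V \<notin> ivars xs" "V \<notin> En G - Cn \<sigma> G" for V
    using interv_asg_keeps_value[OF fin F c xs s cF] that dep t_def by simp
  have "t V = Fn G V t" if V: "V \<in> En G" "V \<notin> ivars xs" for V
  proof (cases "V \<in> Cn \<sigma> G")
    case True
    then have "Fn G V t = Fn G V s" using s t unfolding Cn_def by blast
    also have "\<dots> = s V" using cG V unfolding compatible_def by simp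
    finally show ?thesis using keep V True by simp
  next
    case False
    then have "V \<in> En F - Cn \<sigma> F" using V dep by blast
    then have "t V = Fn F V t" and "fun_sim \<sigma> F G V"
      using eqs V sim unfolding interv_eqs_def sys_sim_def by auto
    then show ?thesis using t unfolding fun_sim_def by auto
  qed
  then have "interv_eqs G xs s t"
    using eqs keep unfolding interv_eqs_def by auto
  then show ?thesis using interv_asg_eqI[OF fin G c] t_def by simp
qed

subsection \<open>Causal teams\<close>

lemma csat_empty_team: "csat ({}, F) \<phi>"
proof (induction \<phi> arbitrary: F)
  case (Or a b)
  then show ?case by force
qed auto

lemma causal_team_subteam: "causal_team \<sigma> (A, F) \<Longrightarrow> B \<subseteq> A \<Longrightarrow> causal_team \<sigma> (B, F)"
  unfolding causal_team_def by auto

lemma causal_team_interv: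
  assumes "finite (sDom \<sigma>)" "consistent xs" "interv_on \<sigma> xs" "causal_team \<sigma> (A, F)"
  shows "causal_team \<sigma> (interv_asg F xs ` A, interv_sys F xs)"
  using assms sysf_ok_interv_sys interv_asg_in_assignments[OF assms(1) _ assms(2,3)]
    compatible_interv_asg[OF assms(1) _ assms(2)]
  unfolding causal_team_def by auto

lemma csat_sys_sim:
  assumes "finite (sDom \<sigma>)"
  shows "wff \<sigma> \<phi> \<Longrightarrow> causal_team \<sigma> (A, F) \<Longrightarrow> causal_team \<sigma> (A, G) \<Longrightarrow> sys_sim \<sigma> F G
    \<Longrightarrow> csat (A, F) \<phi> = csat (A, G) \<phi>"
proof (induction \<phi> arbitrary: A F G)
  case (Neg a)
  have "csat ({s}, F) a = csat ({s}, G) a" if "s \<in> A" for s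
    using Neg causal_team_subteam[of \<sigma> A _ "{s}"] that by auto
  then show ?case by simp
next
  case (Or a b)
  have "csat (B, F) a = csat (B, G) a" "csat (B, F) b = csat (B, G) b" if "B \<subseteq> A" for B
    using Or causal_team_subteam[of \<sigma> A _ B] that by auto
  then show ?case by simp blast
next
  case (Cf xs a)
  show ?case
  proof (cases "consistent xs")
    case c: True
    have xs: "interv_on \<sigma> xs" using Cf.prems(1) unfolding interv_on_def by auto
    have img: "interv_asg F xs ` A = interv_asg G xs ` A"
      using interv_asg_sys_sim[OF assms _ _ Cf.prems(4) c xs] Cf.prems(2,3)
      unfolding causal_team_def by (auto intro!: image_cong)
    show ?thesis
      using Cf.IH[OF _ causal_team_interv[OF assms c xs Cf.prems(2)]
                causal_team_interv[OF assms c xs Cf.prems(3), folded img]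
                sys_sim_interv_sys[OF Cf.prems(4)]]
        Cf.prems(1) img by simp
  qed simp
qed simp_all

lemma csat_cteam_approx:
  assumes "finite (sDom \<sigma>)" "wff \<sigma> \<phi>" "causal_team \<sigma> T" "causal_team \<sigma> S" "cteam_approx \<sigma> T S"
  shows "csat T \<phi> \<longleftrightarrow> csat S \<phi>"
proof -
  obtain A F B G where T: "T = (A, F)" and S: "S = (B, G)" by fastforce
  show ?thesis
  proof (cases "A = {}")
    case True
    then show ?thesis using assms(5) T S csat_empty_team by (auto simp: cteam_approx_def)
  next
    case False
    then have "B = A" "sys_sim \<sigma> F G" using assms(5) T S unfolding cteam_approx_def by auto
    then show ?thesis using csat_sys_sim[OF assms(1,2)] assms(3,4) T S by simp
  qed
qed

subsection \<open>Generalized causal teams\<close>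

lemma sys_sim_refl: "sysf_ok \<sigma> F \<Longrightarrow> sys_sim \<sigma> F F"
  unfolding sys_sim_def fun_sim_def using sysf_ok_Fn_cong by fastforce

lemma sys_sim_sym: "sys_sim \<sigma> F G \<Longrightarrow> sys_sim \<sigma> G F"
  unfolding sys_sim_def fun_sim_def by (metis Int_commute)

definition gteam_matches :: "('v, 'a) signature \<Rightarrow> ('v, 'a) gteam \<Rightarrow> ('v, 'a) gteam \<Rightarrow> bool" where
  "gteam_matches \<sigma> T S \<longleftrightarrow> (\<forall>(s, G)\<in>T. \<exists>G'. (s, G') \<in> S \<and> sys_sim \<sigma> G G')"

lemma gteam_approx_sym: "gteam_approx \<sigma> T S \<Longrightarrow> gteam_approx \<sigma> S T"
  unfolding gteam_approx_def by simp

lemma gteam_matches_if_approx: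
  assumes T: "gen_team \<sigma> T" and approx: "gteam_approx \<sigma> T S"
  shows "gteam_matches \<sigma> T S"
  unfolding gteam_matches_def
proof clarify
  fix s G assume sG: "(s, G) \<in> T"
  then have G: "sysf_ok \<sigma> G" using T unfolding gen_team_def compat_pairs_def by auto
  have "s \<in> fst ` gteam_restr \<sigma> T G"
    using sG sys_sim_refl[OF G] unfolding gteam_restr_def by force
  then have "s \<in> fst ` gteam_restr \<sigma> S G" using approx G unfolding gteam_approx_def by blast
  then show "\<exists>G'. (s, G') \<in> S \<and> sys_sim \<sigma> G G'"
    unfolding gteam_restr_def using sys_sim_sym by force
qed

definition matched_part :: "('v, 'a) signature \<Rightarrow> ('v, 'a) gteam \<Rightarrow> ('v, 'a) gteam \<Rightarrow> ('v, 'a) gteam" where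
  "matched_part \<sigma> S U = {(s, G')\<in>S. \<exists>G. (s, G) \<in> U \<and> sys_sim \<sigma> G G'}"

lemma matched_part_subset: "matched_part \<sigma> S U \<subseteq> S"
  unfolding matched_part_def by auto

lemma gteam_matches_matched_part:
  assumes "gteam_matches \<sigma> T S" "U \<subseteq> T"
  shows "gteam_matches \<sigma> U (matched_part \<sigma> S U)"
  unfolding gteam_matches_def
proof clarify
  fix s G assume sG: "(s, G) \<in> U"
  then obtain G' where "(s, G') \<in> S" "sys_sim \<sigma> G G'"
    using assms unfolding gteam_matches_def by blast
  then show "\<exists>G'. (s, G') \<in> matched_part \<sigma> S U \<and> sys_sim \<sigma> G G'"
    using sG unfolding matched_part_def by blast
qed

lemma matched_part_matches: "gteam_matches \<sigma> (matched_part \<sigma> S U) U"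
  unfolding gteam_matches_def matched_part_def using sys_sim_sym by fastforce

lemma matched_part_Un:
  assumes "gteam_matches \<sigma> S (T1 \<union> T2)"
  shows "S = matched_part \<sigma> S T1 \<union> matched_part \<sigma> S T2"
proof
  show "S \<subseteq> matched_part \<sigma> S T1 \<union> matched_part \<sigma> S T2"
  proof
    fix p assume p: "p \<in> S"
    obtain s G' where p_eq: "p = (s, G')" by fastforce
    obtain G where "(s, G) \<in> T1 \<union> T2" "sys_sim \<sigma> G' G"
      using assms p unfolding p_eq gteam_matches_def by blast
    then show "p \<in> matched_part \<sigma> S T1 \<union> matched_part \<sigma> S T2"
      using p sys_sim_sym unfolding p_eq matched_part_def by blast
  qed
qed (simp add: matched_part_subset)

lemma gen_team_subset: "gen_team \<sigma> T \<Longrightarrow> S \<subseteq> T \<Longrightarrow> gen_team \<sigma> S"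
  unfolding gen_team_def by auto

lemma gen_team_interv:
  assumes "finite (sDom \<sigma>)" "consistent xs" "interv_on \<sigma> xs" "gen_team \<sigma> T"
  shows "gen_team \<sigma> (gteam_interv xs T)"
proof -
  have "(interv_asg F xs s, interv_sys F xs) \<in> compat_pairs \<sigma>" if "(s, F) \<in> T" for s F
  proof -
    have F: "sysf_ok \<sigma> F" and s: "s \<in> assignments \<sigma>"
      using that assms(4) unfolding gen_team_def compat_pairs_def by auto
    show ?thesis
      unfolding compat_pairs_def
      using sysf_ok_interv_sys[OF F] interv_asg_in_assignments[OF assms(1) F assms(2,3) s]
        compatible_interv_asg[OF assms(1) F assms(2)] by simp
  qed
  then show ?thesis unfolding gen_team_def gteam_interv_def by auto
qed

lemma gteam_matches_interv:
  assumes fin: "finite (sDom \<sigma>)" and c: "consistent xs" and xs: "interv_on \<sigma> xs"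
    and T: "gen_team \<sigma> T" and S: "gen_team \<sigma> S" and match: "gteam_matches \<sigma> T S"
  shows "gteam_matches \<sigma> (gteam_interv xs T) (gteam_interv xs S)"
  unfolding gteam_matches_def gteam_interv_def
proof clarify
  fix s G assume sG: "(s, G) \<in> T"
  then obtain G' where sG': "(s, G') \<in> S" and sim: "sys_sim \<sigma> G G'"
    using match unfolding gteam_matches_def by blast
  have "interv_asg G xs s = interv_asg G' xs s"
    using interv_asg_sys_sim[OF fin _ _ sim c xs] sG sG' T S
    unfolding gen_team_def compat_pairs_def by blast
  then show "\<exists>G''. (interv_asg G xs s, G'') \<in> (\<lambda>(s, F). (interv_asg F xs s, interv_sys F xs)) ` S
                 \<and> sys_sim \<sigma> (interv_sys G xs) G''"
    using sG' sys_sim_interv_sys[OF sim] by force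
qed

lemma gsat_gteam_matches:
  assumes fin: "finite (sDom \<sigma>)"
  shows "wff \<sigma> \<phi> \<Longrightarrow> gen_team \<sigma> T \<Longrightarrow> gen_team \<sigma> S
    \<Longrightarrow> gteam_matches \<sigma> T S \<Longrightarrow> gteam_matches \<sigma> S T \<Longrightarrow> gsat T \<phi> \<Longrightarrow> gsat S \<phi>"
proof (induction \<phi> arbitrary: T S)
  case (Eq X x)
  then show ?case unfolding gteam_matches_def by fastforce
next
  case (Dep Xs Y)
  show ?case unfolding gsat.simps
  proof clarify
    fix s F s' F' assume "(s, F) \<in> S" "(s', F') \<in> S" "\<forall>X\<in>set Xs. s X = s' X"
    moreover obtain G G' where "(s, G) \<in> T" "(s', G') \<in> T"
      using Dep.prems(5) calculation(1,2) unfolding gteam_matches_def by blast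
    ultimately show "s Y = s' Y" using Dep.prems(6) by fastforce
  qed
next
  case (Neg a)
  show ?case unfolding gsat.simps
  proof
    fix p assume p: "p \<in> S"
    obtain s G' where p_eq: "p = (s, G')" by fastforce
    obtain G where sG: "(s, G) \<in> T" and sim: "sys_sim \<sigma> G' G"
      using Neg.prems(5) p unfolding p_eq gteam_matches_def by blast
    have "gen_team \<sigma> {(s, G')}" "gen_team \<sigma> {(s, G)}"
      using gen_team_subset[OF Neg.prems(2)] gen_team_subset[OF Neg.prems(3)] sG p p_eq by blast+
    moreover have "gteam_matches \<sigma> {(s, G')} {(s, G)}" "gteam_matches \<sigma> {(s, G)} {(s, G')}"
      using sim sys_sim_sym unfolding gteam_matches_def by auto
    moreover have "wff \<sigma> a" "\<not> gsat {(s, G)} a" using Neg.prems(1,6) sG by auto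
    ultimately show "\<not> gsat {p} a" using Neg.IH p_eq by blast
  qed
next
  case (And a b)
  then show ?case by simp
next
  case (Or a b)
  obtain T1 T2 where T: "T = T1 \<union> T2" and a: "gsat T1 a" and b: "gsat T2 b"
    using Or.prems(6) by (metis gsat.simps(5))
  have T1: "T1 \<subseteq> T" and T2: "T2 \<subseteq> T" using T by blast+
  have wff: "wff \<sigma> a" "wff \<sigma> b" using Or.prems(1) by simp_all
  have gen: "gen_team \<sigma> (matched_part \<sigma> S U)" for U
    using gen_team_subset[OF Or.prems(3) matched_part_subset] .
  have "gsat (matched_part \<sigma> S T1) a"
    using Or.IH(1)[OF wff(1) gen_team_subset[OF Or.prems(2) T1] gen
        gteam_matches_matched_part[OF Or.prems(4) T1] matched_part_matches a] .
  moreover have "gsat (matched_part \<sigma> S T2) b"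
    using Or.IH(2)[OF wff(2) gen_team_subset[OF Or.prems(2) T2] gen
        gteam_matches_matched_part[OF Or.prems(4) T2] matched_part_matches b] .
  moreover have "S = matched_part \<sigma> S T1 \<union> matched_part \<sigma> S T2"
    using matched_part_Un Or.prems(5) T by blast
  ultimately show ?case unfolding gsat.simps by blast
next
  case (GOr a b)
  then show ?case by auto
next
  case (Cf xs a)
  show ?case
  proof (cases "consistent xs")
    case c: True
    have xs: "interv_on \<sigma> xs" using Cf.prems(1) unfolding interv_on_def by auto
    show ?thesis
      using Cf.IH[OF _ gen_team_interv[OF fin c xs Cf.prems(2)] gen_team_interv[OF fin c xs Cf.prems(3)]
          gteam_matches_interv[OF fin c xs Cf.prems(2,3,4)] gteam_matches_interv[OF fin c xs Cf.prems(3,2,5)]]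
        Cf.prems(1,6) c by simp
  qed simp
qed

lemma gsat_gteam_approx:
  assumes "finite (sDom \<sigma>)" "wff \<sigma> \<phi>" "gen_team \<sigma> T" "gen_team \<sigma> S" "gteam_approx \<sigma> T S"
  shows "gsat T \<phi> \<longleftrightarrow> gsat S \<phi>"
  using gsat_gteam_matches[OF assms(1,2)] assms(3,4)
    gteam_matches_if_approx[OF assms(3,5)] gteam_matches_if_approx[OF assms(4) gteam_approx_sym[OF assms(5)]]
  by blast

theorem theorem3p3:
  fixes \<sigma> :: "('v, 'a) signature"
  assumes "signature_ok \<sigma>"
  shows "(\<forall>T S \<phi>. causal_team \<sigma> T \<and> causal_team \<sigma> S \<and> cteam_approx \<sigma> T S \<and>
            wff \<sigma> \<phi> \<and> (is_CO \<phi> \<or> is_COsq \<phi> \<or> is_COD \<phi>)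
            \<longrightarrow> (csat T \<phi> \<longleftrightarrow> csat S \<phi>)) \<and>
         (\<forall>T S \<phi>. gen_team \<sigma> T \<and> gen_team \<sigma> S \<and> gteam_approx \<sigma> T S \<and>
            wff \<sigma> \<phi> \<and> (is_CO \<phi> \<or> is_COsq \<phi> \<or> is_COD \<phi>)
            \<longrightarrow> (gsat T \<phi> \<longleftrightarrow> gsat S \<phi>))"
proof -
  have "finite (sDom \<sigma>)" using assms unfolding signature_ok_def by blast
  then show ?thesis using csat_cteam_approx gsat_gteam_approx by blast
qed

end
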